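(* Let $(\tilde S,\tilde f)$ and $(\tilde T,\tilde g)$ be lifted partial permutations with corresponding Heegaard states $\mathbf x$ and $\mathbf y$, and suppose there is $\phi\in D(\mathbf x,\mathbf y)$. Then for each $i=1,\dots,m$, the local multiplicity of $\phi$ at $O_i$ equals $w_i(\tilde f)-w_i(\tilde g)$.
   Context: Fix integers $0<k<m$. $G_m$ is the group of isometries of $\mathbb R$ generated by $x\mapsto 1-x$ and $x\mapsto 2m-1-x$; $Q_1:\mathbb Z\to\mathbb Z/G_m\cong\{1,\dots,m-1\}$; $Q_2:\frac12+\mathbb Z\to\{1,\dots,m\}$ sends $j-\frac12$ to the unique $i\in\{1,\dots,m\}$ with $i\equiv j$ or $i\equiv 2-j\pmod{2m-2}$. A lifted partial permutation on $k$ letters is a pair $(\tilde S,\tilde f)$ with $\tilde S\subset\mathbb Z$ $G_m$-invariant, $|\tilde S/G_m|=k$, $\tilde f:\tilde S\to\mathbb Z$ $G_m$-equivariant with injective induced map $\tilde S/G_m\to\mathbb Z/G_m$. Weight: $w_j(\tilde f)=\tfrac12\#\{i\in\tilde S: i<j-\tfrac12<\tilde f(i)\text{ or } i>j-\tfrac12>\tilde f(i)\}$. In $\mathbb R^2$ take vertical lines $\tilde\alpha_i=\{i\}\times\mathbb R$, horizontal lines $\tilde\beta_i=\mathbb R\times\{i\}$, and punctures at $(\frac12+i,\frac12+i)$ labeled $O_{Q_2(\frac12+i)}$; $\mathbb G_m$ is generated by the $180^\circ$ rotations about $(\frac12,\frac12)$ and $(m-\frac12,m-\frac12)$; $\mathcal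 H=\mathbb R^2/\mathbb G_m$ with marked points $O_1,\dots,O_m$ ($O_1,O_m$ the orbifold points), and $\alpha_i,\beta_i$ the images of $\tilde\alpha_j,\tilde\beta_j$ with $Q_1(j)=i$. Heegaard states: $k$ points on $\alpha_i\cap\beta_j$'s using distinct $\alpha$'s and $\beta$'s; $(\tilde S,\tilde f)$ corresponds to the image of its graph. Two-chains assign integers to components of $\mathcal H\setminus(\boldsymbol\alpha\cup\boldsymbol\beta)$; $D(\mathbf x,\mathbf y)$ is the set of two-chains with initial corners exactly at $\mathbf x\setminus\mathbf y$ and terminal corners exactly at $\mathbf y\setminus\mathbf x$ (a point with quadrant multiplicities $A,B,C,D$, $A,D$ opposite, is initial if $B+C=A+D+1$, terminal if $B+C=A+D-1$, non-corner if $A+D=B+C$). The local multiplicity at $O_i$ is the multiplicity of the region containing $O_i$. *)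

theory Defs
  imports Main "HOL.Real"
begin

text \<open>The group G_m of isometries of the real line generated by the reflections
  x |-> 1 - x and x |-> 2m - 1 - x (both are involutions, so closing the identity
  under left composition with the generators gives the generated group).\<close>
inductive_set Gm :: "nat \<Rightarrow> (real \<Rightarrow> real) set" for m :: nat where
  Gm_id: "id \<in> Gm m"
| Gm_r1: "g \<in> Gm m \<Longrightarrow> (\<lambda>x. 1 - x) \<circ> g \<in> Gm m"
| Gm_r2: "g \<in> Gm m \<Longrightarrow> (\<lambda>x. 2 * real m - 1 - x) \<circ> g \<in> Gm m"

inductive_set GGm :: "nat \<Rightarrow> (real \<times> real \<Rightarrow> real \<times> real) set" for m :: nat where
  GGm_id: "id \<in> GGm m"
| GGm_r1: "g \<in> GGm m \<Longrightarrow> (\<lambda>(x, y). (1 - x, 1 - y)) \<circ> g \<in> GGm m"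
| GGm_r2: "g \<in> GGm m \<Longrightarrow>
     (\<lambda>(x, y). (2 * real m - 1 - x, 2 * real m - 1 - y)) \<circ> g \<in> GGm m"

definition int_orbit :: "nat \<Rightarrow> int \<Rightarrow> int set" where
  "int_orbit m i = {j. \<exists>g \<in> Gm m. real_of_int j = g (real_of_int i)}"

text \<open>Lifted partial permutation (S, f) on k letters.  The function f is only
  relevant on S.\<close>
definition lifted_pp :: "nat \<Rightarrow> nat \<Rightarrow> int set \<Rightarrow> (int \<Rightarrow> int) \<Rightarrow> bool" where
  "lifted_pp m k S f \<longleftrightarrow>
     (\<forall>g \<in> Gm m. g ` (real_of_int ` S) \<subseteq> real_of_int ` S) \<and>
     card (int_orbit m ` S) = k \<and>
     (\<forall>g \<in> Gm m. \<forall>i \<in> S. \<forall>j \<in> S.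
        real_of_int j = g (real_of_int i) \<longrightarrow> real_of_int (f j) = g (real_of_int (f i))) \<and>
     (\<forall>i \<in> S. \<forall>j \<in> S. int_orbit m (f i) = int_orbit m (f j) \<longrightarrow> int_orbit m i = int_orbit m j)"

definition weight :: "int set \<Rightarrow> (int \<Rightarrow> int) \<Rightarrow> int \<Rightarrow> real" where
  "weight S f j = (1/2) * real (card {i \<in> S.
      (real_of_int i < real_of_int j - 1/2 \<and> real_of_int j - 1/2 < real_of_int (f i)) \<or>
      (real_of_int i > real_of_int j - 1/2 \<and> real_of_int j - 1/2 > real_of_int (f i))})"

text \<open>Points of the Heegaard surface H = R^2 / GG_m are represented by GG_m-orbits.\<close>
definition pt_orbit :: "nat \<Rightarrow> real \<times> real \<Rightarrow> (real \<times> real) set" where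
  "pt_orbit m p = {q. \<exists>g \<in> GGm m. q = g p}"

definition heegaard_state :: "nat \<Rightarrow> int set \<Rightarrow> (int \<Rightarrow> int) \<Rightarrow> (real \<times> real) set set" where
  "heegaard_state m S f = {pt_orbit m (real_of_int i, real_of_int (f i)) | i. i \<in> S}"

text \<open>Components of H minus the alpha and beta curves: images of the open unit
  squares of R^2 minus the integer lines, each represented by the orbit of its centre.\<close>
definition regions :: "nat \<Rightarrow> (real \<times> real) set set" where
  "regions m = {pt_orbit m (real_of_int a + 1/2, real_of_int b + 1/2) | a b. True}"

text \<open>For an
  intersection point (image of the lattice point (a,b)) the quadrant multiplicities are
  A (upper right), D (lower left, opposite to A), B (upper left), C (lower right).
  D(x,y): initial corners exactly at x - y, terminal corners exactly at y - x,
  all other intersection points are non-corners.\<close>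
definition domains :: "nat \<Rightarrow> (real \<times> real) set set \<Rightarrow> (real \<times> real) set set
    \<Rightarrow> ((real \<times> real) set \<Rightarrow> int) set" where
  "domains m x y = {\<phi>. finite {R \<in> regions m. \<phi> R \<noteq> 0} \<and>
     (\<forall>a b :: int.
        let P = pt_orbit m (real_of_int a, real_of_int b);
            A = \<phi> (pt_orbit m (real_of_int a + 1/2, real_of_int b + 1/2));
            D = \<phi> (pt_orbit m (real_of_int a - 1/2, real_of_int b - 1/2));
            B = \<phi> (pt_orbit m (real_of_int a - 1/2, real_of_int b + 1/2));
            C = \<phi> (pt_orbit m (real_of_int a + 1/2, real_of_int b - 1/2))
        in (if P \<in> x - y then B + C = A + D + 1
            else if P \<in> y - x then B + C = A + D - 1
            else A + D = B + C))}"

text \<open>Local multiplicity at O_i: the region containing the puncture at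
  (i - 1/2, i - 1/2), which is labelled O_(Q_2(i - 1/2)) = O_i for 1 <= i <= m.\<close>
definition local_mult :: "nat \<Rightarrow> ((real \<times> real) set \<Rightarrow> int) \<Rightarrow> nat \<Rightarrow> int" where
  "local_mult m \<phi> i = \<phi> (pt_orbit m (real i - 1/2, real i - 1/2))"

end

theory Submission imports Defs begin

text \<open>Lift a domain to the plane: write \<open>\<Phi> a b\<close> for its multiplicity on the unit square
  with lower left corner \<open>(a, b)\<close>. The corner conditions say that the mixed second difference
  of \<open>\<Phi>\<close> at a lattice point is the indicator of the graph of \<open>f\<close> minus that of the graph of
  \<open>g\<close>. Finite support in the quotient makes \<open>\<Phi>\<close> vanish far from the diagonal, and since
  \<open>\<bar>f i - i\<bar>\<close> is constant on each of the finitely many orbits, both graphs stay close to the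
  diagonal. Summing mixed differences from below gives
  \<open>\<Phi> a b - \<Phi> (a - 1) b = [g a \<le> b] - [f a \<le> b]\<close> (which forces \<open>S = T\<close>), and summing these
  along the row \<open>c\<close> from the far left, respectively the far right, counts the arcs
  \<open>i \<mapsto> f i\<close> crossing \<open>c + 1/2\<close> upwards, respectively downwards. Adding both expressions
  gives \<open>2 \<Phi> c c\<close> as twice the difference of the weights at \<open>c + 1\<close>.\<close>

lemma finite_image_if_factors_through:
  assumes "finite (q ` A)" and "\<And>a b. a \<in> A \<Longrightarrow> b \<in> A \<Longrightarrow> q a = q b \<Longrightarrow> h a = h b"
  shows "finite (h ` A)"
proof -
  define rep where "rep z = (SOME a. a \<in> A \<and> q a = z)" for z
  have "h a = h (rep (q a))" if "a \<in> A" for a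
    using someI[of "\<lambda>b. b \<in> A \<and> q b = q a" a] that assms(2) unfolding rep_def by metis
  then have "h ` A \<subseteq> (h \<circ> rep) ` q ` A"
    by auto
  then show ?thesis
    using assms(1) finite_subset by blast
qed

lemma int_fun_eq_if_increments_eq:
  fixes D E :: "int \<Rightarrow> 'a::ab_group_add"
  assumes "\<And>a. D a - D (a - 1) = E a - E (a - 1)" and "D k = E k"
  shows "D x = E x"
proof (induction x rule: int_induct[where k = k])
  case base
  show ?case using assms(2) .
next
  case (step1 i)
  then show ?case using assms(1)[of "i + 1"] by (simp add: algebra_simps)
next
  case (step2 i)
  then show ?case using assms(1)[of i] by (simp add: algebra_simps)
qed

lemma card_atMost_step:
  fixes a :: int
  assumes "finite {i. i \<le> a - 1 \<and> P i}"
  shows "int (card {i. i \<le> a \<and> P i}) = int (card {i. i \<le> a - 1 \<and> P i}) + of_bool (P a)"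
proof -
  have "{i. i \<le> a \<and> P i} = (if P a then insert a else id) {i. i \<le> a - 1 \<and> P i}"
    by (auto simp: le_less)
  then show ?thesis
    using assms by simp
qed

lemma card_greaterThan_step:
  fixes a :: int
  assumes "finite {i. a < i \<and> P i}"
  shows "int (card {i. a - 1 < i \<and> P i}) = int (card {i. a < i \<and> P i}) + of_bool (P a)"
proof -
  have "{i. a - 1 < i \<and> P i} = (if P a then insert a else id) {i. a < i \<and> P i}"
    by (auto simp: less_le)
  then show ?thesis
    using assms by simp
qed

definition crossings :: "int set \<Rightarrow> (int \<Rightarrow> int) \<Rightarrow> int \<Rightarrow> int set" where
  "crossings S f c = {i \<in> S. i \<le> c \<and> c < f i \<or> c < i \<and> f i \<le> c}"

definition bounded_displacement :: "int set \<Rightarrow> (int \<Rightarrow> int) \<Rightarrow> int \<Rightarrow> bool" where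
  "bounded_displacement S h B \<longleftrightarrow> (\<forall>i \<in> S. \<bar>h i - i\<bar> \<le> B)"

lemma upward_arcs_subset:
  "bounded_displacement S h B \<Longrightarrow> {i. i \<le> a \<and> i \<in> S \<and> c < h i} \<subseteq> {c + 1 - B..a}"
  unfolding bounded_displacement_def by (force simp: abs_le_iff)

lemma downward_arcs_subset:
  "bounded_displacement S h B \<Longrightarrow> {i. a < i \<and> i \<in> S \<and> h i \<le> c} \<subseteq> {a<..c + B}"
  unfolding bounded_displacement_def by (force simp: abs_le_iff)

lemma card_crossings_split:
  assumes "bounded_displacement S h B"
  shows "int (card (crossings S h c))
    = int (card {i. i \<le> c \<and> i \<in> S \<and> c < h i}) + int (card {i. c < i \<and> i \<in> S \<and> h i \<le> c})"
proof -
  have "crossings S h c = {i. i \<le> c \<and> i \<in> S \<and> c < h i} \<union> {i. c < i \<and> i \<in> S \<and> h i \<le> c}"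
    unfolding crossings_def by auto
  moreover have "finite {i. i \<le> c \<and> i \<in> S \<and> c < h i}" "finite {i. c < i \<and> i \<in> S \<and> h i \<le> c}"
    using finite_subset[OF upward_arcs_subset[OF assms]] finite_subset[OF downward_arcs_subset[OF assms]]
    by auto
  ultimately show ?thesis
    by (simp add: card_Un_disjoint disjoint_iff)
qed

locale lattice_domain =
  fixes \<Phi> :: "int \<Rightarrow> int \<Rightarrow> int" and S T :: "int set" and f g :: "int \<Rightarrow> int" and N B :: int
  assumes corner_relation: "\<And>a b. \<Phi> (a - 1) b + \<Phi> a (b - 1) - \<Phi> a b - \<Phi> (a - 1) (b - 1)
      = of_bool (a \<in> S \<and> b = f a) - of_bool (a \<in> T \<and> b = g a)"
    and vanishes_off_diagonal: "\<And>a b. N < \<bar>a - b\<bar> \<Longrightarrow> \<Phi> a b = 0"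
    and bounded_displacement_f: "bounded_displacement S f B"
    and bounded_displacement_g: "bounded_displacement T g B"
begin

lemma column_difference:
  "\<Phi> a b - \<Phi> (a - 1) b = of_bool (a \<in> T \<and> g a \<le> b) - of_bool (a \<in> S \<and> f a \<le> b)"
proof (rule int_fun_eq_if_increments_eq[of "\<lambda>b. \<Phi> a b - \<Phi> (a - 1) b"
    "\<lambda>b. of_bool (a \<in> T \<and> g a \<le> b) - of_bool (a \<in> S \<and> f a \<le> b)"
    "min (min (f a) (g a)) (a - N - 2) - 1"])
  fix x
  show "\<Phi> a x - \<Phi> (a - 1) x - (\<Phi> a (x - 1) - \<Phi> (a - 1) (x - 1))
      = of_bool (a \<in> T \<and> g a \<le> x) - of_bool (a \<in> S \<and> f a \<le> x)
        - (of_bool (a \<in> T \<and> g a \<le> x - 1) - of_bool (a \<in> S \<and> f a \<le> x - 1))"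
    using corner_relation[of a x] by auto
next
  let ?b = "min (min (f a) (g a)) (a - N - 2) - 1"
  have "\<Phi> a ?b = 0" and "\<Phi> (a - 1) ?b = 0"
    by (auto intro!: vanishes_off_diagonal)
  then show "\<Phi> a ?b - \<Phi> (a - 1) ?b
      = of_bool (a \<in> T \<and> g a \<le> ?b) - of_bool (a \<in> S \<and> f a \<le> ?b)"
    by simp
qed

lemma same_support: "S = T"
proof (rule set_eqI)
  fix a
  define b where "b = max (max (f a) (g a)) (a + N + 2)"
  have "\<Phi> a b = 0" and "\<Phi> (a - 1) b = 0"
    by (auto intro!: vanishes_off_diagonal simp: b_def)
  moreover have "f a \<le> b" and "g a \<le> b"
    by (simp_all add: b_def)
  ultimately show "a \<in> S \<longleftrightarrow> a \<in> T"
    using column_difference[of a b] by auto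
qed

lemma bounded_displacement_g_on_S: "bounded_displacement S g B"
  using bounded_displacement_g by (simp add: same_support)

lemma row_from_left:
  "\<Phi> a c = int (card {i. i \<le> a \<and> i \<in> S \<and> c < f i}) - int (card {i. i \<le> a \<and> i \<in> S \<and> c < g i})"
proof (rule int_fun_eq_if_increments_eq[of "\<lambda>a. \<Phi> a c"
    "\<lambda>a. int (card {i. i \<le> a \<and> i \<in> S \<and> c < f i}) - int (card {i. i \<le> a \<and> i \<in> S \<and> c < g i})"
    "min (c - N - 1) (c - B)"])
  fix x
  note finite_f = finite_subset[OF upward_arcs_subset[OF bounded_displacement_f]]
    and finite_g = finite_subset[OF upward_arcs_subset[OF bounded_displacement_g_on_S]]
  show "\<Phi> x c - \<Phi> (x - 1) c
    = int (card {i. i \<le> x \<and> i \<in> S \<and> c < f i}) - int (card {i. i \<le> x \<and> i \<in> S \<and> c < g i})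
      - (int (card {i. i \<le> x - 1 \<and> i \<in> S \<and> c < f i})
         - int (card {i. i \<le> x - 1 \<and> i \<in> S \<and> c < g i}))"
    using column_difference[of x c] card_atMost_step[OF finite_f] card_atMost_step[OF finite_g]
    by (auto simp: same_support)
next
  let ?x = "min (c - N - 1) (c - B)"
  have "{i. i \<le> ?x \<and> i \<in> S \<and> c < f i} = {}" and "{i. i \<le> ?x \<and> i \<in> S \<and> c < g i} = {}"
    using upward_arcs_subset[OF bounded_displacement_f, of ?x c]
      upward_arcs_subset[OF bounded_displacement_g_on_S, of ?x c] by auto
  moreover have "\<Phi> ?x c = 0"
    by (rule vanishes_off_diagonal) simp
  ultimately show "\<Phi> ?x c
    = int (card {i. i \<le> ?x \<and> i \<in> S \<and> c < f i}) - int (card {i. i \<le> ?x \<and> i \<in> S \<and> c < g i})"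
    by (simp only: card.empty)
qed

lemma row_from_right:
  "\<Phi> a c = int (card {i. a < i \<and> i \<in> S \<and> f i \<le> c}) - int (card {i. a < i \<and> i \<in> S \<and> g i \<le> c})"
proof (rule int_fun_eq_if_increments_eq[of "\<lambda>a. \<Phi> a c"
    "\<lambda>a. int (card {i. a < i \<and> i \<in> S \<and> f i \<le> c}) - int (card {i. a < i \<and> i \<in> S \<and> g i \<le> c})"
    "max (c + N + 1) (c + B)"])
  fix x
  note finite_f = finite_subset[OF downward_arcs_subset[OF bounded_displacement_f]]
    and finite_g = finite_subset[OF downward_arcs_subset[OF bounded_displacement_g_on_S]]
  show "\<Phi> x c - \<Phi> (x - 1) c
    = int (card {i. x < i \<and> i \<in> S \<and> f i \<le> c}) - int (card {i. x < i \<and> i \<in> S \<and> g i \<le> c})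
      - (int (card {i. x - 1 < i \<and> i \<in> S \<and> f i \<le> c})
         - int (card {i. x - 1 < i \<and> i \<in> S \<and> g i \<le> c}))"
    using column_difference[of x c] card_greaterThan_step[OF finite_f] card_greaterThan_step[OF finite_g]
    by (auto simp: same_support)
next
  let ?x = "max (c + N + 1) (c + B)"
  have "{i. ?x < i \<and> i \<in> S \<and> f i \<le> c} = {}" and "{i. ?x < i \<and> i \<in> S \<and> g i \<le> c} = {}"
    using downward_arcs_subset[OF bounded_displacement_f, of ?x c]
      downward_arcs_subset[OF bounded_displacement_g_on_S, of ?x c] by auto
  moreover have "\<Phi> ?x c = 0"
    by (rule vanishes_off_diagonal) simp
  ultimately show "\<Phi> ?x c
    = int (card {i. ?x < i \<and> i \<in> S \<and> f i \<le> c}) - int (card {i. ?x < i \<and> i \<in> S \<and> g i \<le> c})"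
    by (simp only: card.empty)
qed

lemma diagonal_value: "2 * \<Phi> c c = int (card (crossings S f c)) - int (card (crossings T g c))"
  using row_from_left[of c c] row_from_right[of c c]
    card_crossings_split[OF bounded_displacement_f, of c]
    card_crossings_split[OF bounded_displacement_g_on_S, of c]
  by (simp add: same_support)

end

lemma Gm_isometry: "h \<in> Gm m \<Longrightarrow> \<bar>h x - h y\<bar> = \<bar>x - y\<bar>"
  by (induction rule: Gm.induct) (simp_all add: abs_minus_commute)

lemma GGm_eq_map_prod: "G \<in> GGm m \<Longrightarrow> \<exists>h \<in> Gm m. G = map_prod h h"
proof (induction rule: GGm.induct)
  case GGm_id
  show ?case by (rule bexI[of _ id]) (simp_all add: Gm.Gm_id)
next
  case (GGm_r1 G)
  then obtain h where "h \<in> Gm m" "G = map_prod h h" by blast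
  then show ?case
    by (intro bexI[of _ "(\<lambda>x. 1 - x) \<circ> h"]) (auto intro: Gm.Gm_r1)
next
  case (GGm_r2 G)
  then obtain h where "h \<in> Gm m" "G = map_prod h h" by blast
  then show ?case
    by (intro bexI[of _ "(\<lambda>x. 2 * real m - 1 - x) \<circ> h"]) (auto intro: Gm.Gm_r2)
qed

lemma pt_orbit_self: "p \<in> pt_orbit m p"
  unfolding pt_orbit_def mem_Collect_eq by (rule bexI[of _ id]) (simp_all add: GGm.GGm_id)

lemma int_orbit_self: "i \<in> int_orbit m i"
  unfolding int_orbit_def mem_Collect_eq by (rule bexI[of _ id]) (simp_all add: Gm.Gm_id)

lemma pt_orbit_abs_diff: "q \<in> pt_orbit m p \<Longrightarrow> \<bar>fst q - snd q\<bar> = \<bar>fst p - snd p\<bar>"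
  unfolding pt_orbit_def by (auto dest!: GGm_eq_map_prod simp: Gm_isometry)

lemma lifted_pp_abs_displacement_eq:
  assumes "lifted_pp m k S f" and "i \<in> S" and "j \<in> S" and "int_orbit m i = int_orbit m j"
  shows "\<bar>f i - i\<bar> = \<bar>f j - j\<bar>"
proof -
  obtain h where h: "h \<in> Gm m" "real_of_int j = h (real_of_int i)"
    using int_orbit_self[of j m] assms(4) unfolding int_orbit_def by auto
  then have "real_of_int (f j) = h (real_of_int (f i))"
    using assms(1-3) unfolding lifted_pp_def by blast
  then have "\<bar>real_of_int (f j) - real_of_int j\<bar> = \<bar>real_of_int (f i) - real_of_int i\<bar>"
    using h Gm_isometry by simp
  then show ?thesis
    by linarith
qed

lemma lifted_pp_bounded_displacement:
  assumes "lifted_pp m k S f" and "0 < k"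
  shows "\<exists>B. bounded_displacement S f B"
proof -
  have "card (int_orbit m ` S) = k"
    using assms(1) unfolding lifted_pp_def by blast
  then have "finite (int_orbit m ` S)"
    using assms(2) card.infinite by force
  then have "finite ((\<lambda>i. \<bar>f i - i\<bar>) ` S)"
    by (rule finite_image_if_factors_through) (rule lifted_pp_abs_displacement_eq[OF assms(1)])
  then have "bdd_above ((\<lambda>i. \<bar>f i - i\<bar>) ` S)"
    by (rule bdd_above_finite)
  then show ?thesis
    unfolding bounded_displacement_def bdd_above_def by auto
qed

lemma lattice_point_in_heegaard_state_iff:
  assumes "lifted_pp m k S f"
  shows "pt_orbit m (real_of_int a, real_of_int b) \<in> heegaard_state m S f \<longleftrightarrow> a \<in> S \<and> b = f a"
proof
  assume "pt_orbit m (real_of_int a, real_of_int b) \<in> heegaard_state m S f"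
  then obtain i where i: "i \<in> S"
    and "pt_orbit m (real_of_int a, real_of_int b) = pt_orbit m (real_of_int i, real_of_int (f i))"
    unfolding heegaard_state_def by blast
  then have "(real_of_int a, real_of_int b) \<in> pt_orbit m (real_of_int i, real_of_int (f i))"
    using pt_orbit_self[of "(real_of_int a, real_of_int b)" m] by simp
  then obtain h where h: "h \<in> Gm m" "real_of_int a = h (real_of_int i)" "real_of_int b = h (real_of_int (f i))"
    unfolding pt_orbit_def by (auto dest!: GGm_eq_map_prod)
  have "h ` real_of_int ` S \<subseteq> real_of_int ` S"
    using assms h(1) unfolding lifted_pp_def by blast
  then have "real_of_int a \<in> real_of_int ` S"
    using h(2) i by blast
  then have a: "a \<in> S"
    by (auto simp: image_iff)
  have "\<forall>i \<in> S. \<forall>j \<in> S. real_of_int j = h (real_of_int i) \<longrightarrow> real_of_int (f j) = h (real_of_int (f i))"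
    using assms h(1) unfolding lifted_pp_def by blast
  then have "real_of_int (f a) = h (real_of_int (f i))"
    using a h(2) i by blast
  then show "a \<in> S \<and> b = f a"
    using a h(3) by simp
next
  assume "a \<in> S \<and> b = f a"
  then show "pt_orbit m (real_of_int a, real_of_int b) \<in> heegaard_state m S f"
    unfolding heegaard_state_def by auto
qed

lemma finite_support_vanishes_off_diagonal:
  assumes "finite {R \<in> regions m. \<phi> R \<noteq> 0}"
  shows "\<exists>N. \<forall>a b. N < \<bar>a - b\<bar> \<longrightarrow> \<phi> (pt_orbit m (real_of_int a + 1/2, real_of_int b + 1/2)) = 0"
proof -
  define square where "square = (\<lambda>(a, b). pt_orbit m (real_of_int a + 1/2, real_of_int b + 1/2))"
  define A where "A = {ab. \<phi> (square ab) \<noteq> 0}"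
  have "square ` A \<subseteq> {R \<in> regions m. \<phi> R \<noteq> 0}"
    unfolding A_def square_def regions_def by auto
  then have finite_squares: "finite (square ` A)"
    using assms finite_subset by blast
  have abs_diff_eq: "\<bar>a - b\<bar> = \<bar>a' - b'\<bar>" if "square (a, b) = square (a', b')" for a b a' b' :: int
  proof -
    have "(real_of_int a + 1/2, real_of_int b + 1/2) \<in> square (a', b')"
      using that pt_orbit_self unfolding square_def by auto
    then have "\<bar>real_of_int a - real_of_int b\<bar> = \<bar>real_of_int a' - real_of_int b'\<bar>"
      unfolding square_def using pt_orbit_abs_diff by fastforce
    then show ?thesis
      by linarith
  qed
  have "finite ((\<lambda>(a, b). \<bar>a - b\<bar>) ` A)"
    using finite_squares by (rule finite_image_if_factors_through) (auto dest: abs_diff_eq)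
  then have "bdd_above ((\<lambda>(a, b). \<bar>a - b\<bar>) ` A)"
    by (rule bdd_above_finite)
  then obtain N where "\<And>a b. (a, b) \<in> A \<Longrightarrow> \<bar>a - b\<bar> \<le> N"
    unfolding bdd_above_def by fastforce
  then have "\<phi> (square (a, b)) = 0" if "N < \<bar>a - b\<bar>" for a b
    using that unfolding A_def by force
  then show ?thesis
    unfolding square_def by auto
qed

lemma lattice_domain_of_domain:
  assumes "0 < k" and "lifted_pp m k S f" and "lifted_pp m k T g"
    and "\<phi> \<in> domains m (heegaard_state m S f) (heegaard_state m T g)"
  shows "\<exists>N B. lattice_domain (\<lambda>a b. \<phi> (pt_orbit m (real_of_int a + 1/2, real_of_int b + 1/2))) S T f g N B"
proof -
  define \<Phi> where "\<Phi> = (\<lambda>a b. \<phi> (pt_orbit m (real_of_int a + 1/2, real_of_int b + 1/2)))"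
  have support: "finite {R \<in> regions m. \<phi> R \<noteq> 0}"
    and corner: "\<forall>a b :: int.
        let P = pt_orbit m (real_of_int a, real_of_int b);
            A = \<phi> (pt_orbit m (real_of_int a + 1/2, real_of_int b + 1/2));
            D = \<phi> (pt_orbit m (real_of_int a - 1/2, real_of_int b - 1/2));
            B = \<phi> (pt_orbit m (real_of_int a - 1/2, real_of_int b + 1/2));
            C = \<phi> (pt_orbit m (real_of_int a + 1/2, real_of_int b - 1/2))
        in (if P \<in> heegaard_state m S f - heegaard_state m T g then B + C = A + D + 1
            else if P \<in> heegaard_state m T g - heegaard_state m S f then B + C = A + D - 1
            else A + D = B + C)"
    using assms(4) unfolding domains_def by blast+
  have corner_relation: "\<Phi> (a - 1) b + \<Phi> a (b - 1) - \<Phi> a b - \<Phi> (a - 1) (b - 1)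
      = of_bool (a \<in> S \<and> b = f a) - of_bool (a \<in> T \<and> b = g a)" for a b
  proof -
    define x where "x \<longleftrightarrow> a \<in> S \<and> b = f a"
    define y where "y \<longleftrightarrow> a \<in> T \<and> b = g a"
    have shift_a: "real_of_int a - 1/2 = real_of_int (a - 1) + 1/2"
      and shift_b: "real_of_int b - 1/2 = real_of_int (b - 1) + 1/2"
      by simp_all
    have "if x \<and> \<not> y then \<Phi> (a - 1) b + \<Phi> a (b - 1) = \<Phi> a b + \<Phi> (a - 1) (b - 1) + 1
      else if y \<and> \<not> x then \<Phi> (a - 1) b + \<Phi> a (b - 1) = \<Phi> a b + \<Phi> (a - 1) (b - 1) - 1
      else \<Phi> a b + \<Phi> (a - 1) (b - 1) = \<Phi> (a - 1) b + \<Phi> a (b - 1)"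
      using corner[rule_format, of a b] unfolding Let_def \<Phi>_def shift_a shift_b Diff_iff x_def y_def
        lattice_point_in_heegaard_state_iff[OF assms(2)] lattice_point_in_heegaard_state_iff[OF assms(3)] .
    then show ?thesis
      unfolding x_def[symmetric] y_def[symmetric] by (cases x; cases y) simp_all
  qed
  obtain N where vanishes: "\<And>a b. N < \<bar>a - b\<bar> \<Longrightarrow> \<Phi> a b = 0"
    using finite_support_vanishes_off_diagonal[OF support] unfolding \<Phi>_def by blast
  obtain B\<^sub>f B\<^sub>g where "bounded_displacement S f B\<^sub>f" and "bounded_displacement T g B\<^sub>g"
    using lifted_pp_bounded_displacement[OF assms(2,1)] lifted_pp_bounded_displacement[OF assms(3,1)]
    by blast
  then have "bounded_displacement S f (max B\<^sub>f B\<^sub>g)" and "bounded_displacement T g (max B\<^sub>f B\<^sub>g)"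
    unfolding bounded_displacement_def by force+
  with corner_relation vanishes have "lattice_domain \<Phi> S T f g N (max B\<^sub>f B\<^sub>g)"
    by unfold_locales
  then show ?thesis
    unfolding \<Phi>_def by blast
qed

lemma weight_eq_card_crossings: "weight S f j = card (crossings S f (j - 1)) / 2"
proof -
  have half: "real_of_int x < real_of_int j - 1/2 \<longleftrightarrow> x \<le> j - 1" for x :: int
    by linarith
  have "{i \<in> S. real_of_int i < real_of_int j - 1/2 \<and> real_of_int j - 1/2 < real_of_int (f i) \<or>
      real_of_int j - 1/2 < real_of_int i \<and> real_of_int (f i) < real_of_int j - 1/2}
    = crossings S f (j - 1)"
    unfolding crossings_def half by (auto simp: not_le[symmetric])
  then show ?thesis
    unfolding weight_def by simp
qed

theorem mainTheorem5:
  fixes m k :: nat and S T :: "int set" and f g :: "int \<Rightarrow> int"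
    and \<phi> :: "(real \<times> real) set \<Rightarrow> int"
  assumes "0 < k" and "k < m"
    and "lifted_pp m k S f" and "lifted_pp m k T g"
    and "\<phi> \<in> domains m (heegaard_state m S f) (heegaard_state m T g)"
  shows "\<forall>i \<in> {1..m}. real_of_int (local_mult m \<phi> i) = weight S f (int i) - weight T g (int i)"
proof
  fix i
  define \<Phi> where "\<Phi> a b = \<phi> (pt_orbit m (real_of_int a + 1/2, real_of_int b + 1/2))" for a b
  obtain N B where "lattice_domain \<Phi> S T f g N B"
    using lattice_domain_of_domain[OF assms(1,3,4,5)] unfolding \<Phi>_def by blast
  then have "2 * \<Phi> (int i - 1) (int i - 1)
      = int (card (crossings S f (int i - 1))) - int (card (crossings T g (int i - 1)))"
    by (rule lattice_domain.diagonal_value)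
  moreover have "local_mult m \<phi> i = \<Phi> (int i - 1) (int i - 1)"
    unfolding local_mult_def \<Phi>_def by (simp add: algebra_simps)
  ultimately show "real_of_int (local_mult m \<phi> i) = weight S f (int i) - weight T g (int i)"
    unfolding weight_eq_card_crossings by linarith
qed

end
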